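(* For any integer $d\geq 2$, Kůrka's dichotomy fails on the free group $\mathbb{F}_d$ on $d$ generators: there exist a finite alphabet $A$ and a cellular automaton on $\mathbb{F}_d$ with alphabet $A$ which is not sensitive to initial conditions and has no equicontinuity point.
   Context: For a finitely generated group $\Gamma$ with finite generating set $E$ closed under inverses, let $d_E$ be the word metric and define the Cantor metric on $A^\Gamma$ ($A$ a finite alphabet) by $d^E(x,y)=2^{-k}$ with $k=\min\{d_E(1,g): x(g)\neq y(g)\}$; $B^E(x,r)$ is its closed ball. A cellular automaton (CA) on $\Gamma$ with alphabet $A$ is a map $\Phi:A^\Gamma\to A^\Gamma$ given by a finite $S\subseteq\Gamma$ and $\mu:A^S\to A$ via $\Phi(x)(g)=\mu(s\mapsto x(gs))$. $x$ is an equicontinuity point of $\Phi$ if $\forall\epsilon>0\,\exists\delta>0\,\forall t\in\mathbb{N}$, $\Phi^t(B^E(x,\delta))\subseteq B^E(\Phi^t(x),\epsilon)$. $\Phi$ is sensitive to initial conditions if $\exists\epsilon>0\,\forall x\,\forall\delta>0\,\exists t\in\mathbb{N}\,\exists y\in B^E(x,\delta)$ with $\Phi^t(y)\notin B^E(\Phi^t(x),\epsilon)$. These notions do not depend on $E$. Kůrka's dichotomy holds on $\Gamma$ if every CA on $\Gamma$ (any finite alphabet) that is not sensitive has an equicontinuity point. *)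

theory Defs
  imports Complex_Main "HOL-Library.FuncSet"
begin

text \<open>A letter (i, True) is the generator a_i, (i, False) is its inverse.
  Elements of F_d are the freely reduced words over a_0,...,a_{d-1} and
  their inverses; the identity is the empty word.\<close>

type_synonym fgword = "(nat \<times> bool) list"

definition cancels :: "nat \<times> bool \<Rightarrow> nat \<times> bool \<Rightarrow> bool" where
  "cancels a b \<longleftrightarrow> fst a = fst b \<and> snd a \<noteq> snd b"

fun reduced :: "fgword \<Rightarrow> bool" where
  "reduced [] = True"
| "reduced [a] = True"
| "reduced (a # b # w) = (\<not> cancels a b \<and> reduced (b # w))"

definition fg_carrier :: "nat \<Rightarrow> fgword set" where
  "fg_carrier d = {w. reduced w \<and> (\<forall>a \<in> set w. fst a < d)}"

text \<open>Free reduction with a stack (the stack holds the reversed reduced prefix).\<close>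
definition red_step :: "fgword \<Rightarrow> nat \<times> bool \<Rightarrow> fgword" where
  "red_step st x = (case st of [] \<Rightarrow> [x]
       | a # st' \<Rightarrow> (if cancels a x then st' else x # st))"

definition reduce :: "fgword \<Rightarrow> fgword" where
  "reduce w = rev (foldl red_step [] w)"

definition fg_mult :: "fgword \<Rightarrow> fgword \<Rightarrow> fgword" where
  "fg_mult g h = reduce (g @ h)"

definition word_len :: "fgword \<Rightarrow> nat" where
  "word_len g = length g"

definition configs :: "nat \<Rightarrow> nat set \<Rightarrow> (fgword \<Rightarrow> nat) set" where
  "configs d A = {x. \<forall>g \<in> fg_carrier d. x g \<in> A}"

definition cdist :: "nat \<Rightarrow> (fgword \<Rightarrow> nat) \<Rightarrow> (fgword \<Rightarrow> nat) \<Rightarrow> real" where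
  "cdist d x y =
     (if \<forall>g \<in> fg_carrier d. x g = y g then 0
      else (1/2) ^ (LEAST k. \<exists>g \<in> fg_carrier d. word_len g = k \<and> x g \<noteq> y g))"

definition cball_c :: "nat \<Rightarrow> nat set \<Rightarrow> (fgword \<Rightarrow> nat) \<Rightarrow> real \<Rightarrow> (fgword \<Rightarrow> nat) set" where
  "cball_c d A x r = {y \<in> configs d A. cdist d x y \<le> r}"

definition local_rule :: "nat set \<Rightarrow> fgword set \<Rightarrow> ((fgword \<Rightarrow> nat) \<Rightarrow> nat) \<Rightarrow> bool" where
  "local_rule A S \<mu> \<longleftrightarrow> (\<forall>p \<in> S \<rightarrow>\<^sub>E A. \<mu> p \<in> A)"

definition ca :: "fgword set \<Rightarrow> ((fgword \<Rightarrow> nat) \<Rightarrow> nat) \<Rightarrow> (fgword \<Rightarrow> nat) \<Rightarrow> (fgword \<Rightarrow> nat)" where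
  "ca S \<mu> x = (\<lambda>g. \<mu> (\<lambda>s \<in> S. x (fg_mult g s)))"

definition equicont_point ::
  "nat \<Rightarrow> nat set \<Rightarrow> ((fgword \<Rightarrow> nat) \<Rightarrow> (fgword \<Rightarrow> nat)) \<Rightarrow> (fgword \<Rightarrow> nat) \<Rightarrow> bool" where
  "equicont_point d A \<Phi> x \<longleftrightarrow>
     (\<forall>\<epsilon>>0. \<exists>\<delta>>0. \<forall>t::nat.
        (\<Phi> ^^ t) ` cball_c d A x \<delta> \<subseteq> cball_c d A ((\<Phi> ^^ t) x) \<epsilon>)"

definition sensitive ::
  "nat \<Rightarrow> nat set \<Rightarrow> ((fgword \<Rightarrow> nat) \<Rightarrow> (fgword \<Rightarrow> nat)) \<Rightarrow> bool" where
  "sensitive d A \<Phi> \<longleftrightarrow>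
     (\<exists>\<epsilon>>0. \<forall>x \<in> configs d A. \<forall>\<delta>>0. \<exists>t::nat. \<exists>y \<in> cball_c d A x \<delta>.
        (\<Phi> ^^ t) y \<notin> cball_c d A ((\<Phi> ^^ t) x) \<epsilon>)"

end

theory Submission
  imports Defs
begin

text \<open>States are pairs (shape, bit). Shapes evolve autonomously: a blank cell becomes active
  as soon as a non-blank neighbour touches it, unless that neighbour is a wall facing it; bits
  become the parity of the neighbouring bits across unsealed edges, an edge being sealed when
  it joins a blank cell to a wall facing that cell.

  A blank ball enclosed by inward-facing walls is invariant and isolated from the outside, so
  the configuration containing it is stable under perturbations outside a slightly larger
  ball: the automaton is not sensitive.

  Conversely, any configuration can be perturbed far away so that everything outside a large
  ball is active. A wall faces a single direction, so a cell that ever becomes non-blank has at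
  most one neighbour that stays blank forever; as \<open>d \<ge> 2\<close>, every such cell continues along
  a non-backtracking ray of such cells. A bit flipped far out on that ray travels back along
  it, because in the tree of the free group each ray cell sees the difference through exactly
  one neighbour, and eventually changes the state near the origin. Hence no configuration is
  an equicontinuity point.\<close>

subsection \<open>Free reduction\<close>

definition inv_letter :: "nat \<times> bool \<Rightarrow> nat \<times> bool" where
  "inv_letter l = (fst l, \<not> snd l)"

lemma inv_letter_inv_letter [simp]: "inv_letter (inv_letter l) = l"
  by (cases l) (simp add: inv_letter_def)

lemma fst_inv_letter [simp]: "fst (inv_letter l) = fst l"
  by (simp add: inv_letter_def)

lemma cancels_iff: "cancels a b \<longleftrightarrow> a = inv_letter b"
  by (cases a; cases b) (auto simp: cancels_def inv_letter_def)

lemma reduced_Cons: "reduced (a # w) \<longleftrightarrow> reduced w \<and> (w \<noteq> [] \<longrightarrow> \<not> cancels a (hd w))"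
  by (cases w) auto

lemma reduced_append:
  "reduced (xs @ ys) \<longleftrightarrow>
     reduced xs \<and> reduced ys \<and> (xs \<noteq> [] \<and> ys \<noteq> [] \<longrightarrow> \<not> cancels (last xs) (hd ys))"
proof (induction xs)
  case (Cons a xs)
  then show ?case
    by (cases xs) (auto simp: reduced_Cons)
qed simp

lemma reduced_snoc: "reduced (xs @ [a]) \<longleftrightarrow> reduced xs \<and> (xs \<noteq> [] \<longrightarrow> \<not> cancels (last xs) a)"
  by (simp add: reduced_append)

lemma reduced_replicate: "reduced (replicate k a)"
  by (induction k) (auto simp: reduced_Cons cancels_def)

lemma reduced_rev_red_step: "reduced (rev st) \<Longrightarrow> reduced (rev (red_step st l))"
  by (cases st) (auto simp: red_step_def reduced_snoc reduced_append)

lemma reduced_rev_foldl_red_step: "reduced (rev st) \<Longrightarrow> reduced (rev (foldl red_step st w))"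
  by (induction w arbitrary: st) (auto simp: reduced_rev_red_step)

lemma foldl_red_step_reduced: "reduced w \<Longrightarrow> foldl red_step [] w = rev w"
proof (induction w rule: rev_induct)
  case (snoc a w)
  then have "reduced w" and "w \<noteq> [] \<longrightarrow> \<not> cancels (last w) a"
    by (auto simp: reduced_snoc)
  then show ?case
    using snoc.IH by (cases "rev w") (auto simp: red_step_def last_rev[symmetric])
qed simp

lemma reduce_reduced: "reduced w \<Longrightarrow> reduce w = w"
  by (simp add: reduce_def foldl_red_step_reduced)

lemma length_reduce_le: "length (reduce w) \<le> length w"
proof -
  have "length (foldl red_step st w) \<le> length st + length w" for st
  proof (induction w arbitrary: st)
    case (Cons a w)
    have "length (red_step st a) \<le> length st + 1"
      by (cases st) (auto simp: red_step_def)
    then show ?case using Cons.IH[of "red_step st a"] by simp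
  qed simp
  from this[of "[]"] show ?thesis by (simp add: reduce_def)
qed

lemma red_step_cancel:
  assumes "reduced (rev st)"
  shows "red_step (red_step st l) (inv_letter l) = st"
proof (cases st)
  case (Cons a st')
  show ?thesis
  proof (cases "cancels a l")
    case True
    with Cons assms show ?thesis
      by (cases st') (auto simp: red_step_def cancels_iff reduced_append)
  qed (use Cons in \<open>simp add: red_step_def cancels_iff\<close>)
qed (simp add: red_step_def cancels_iff)

lemma foldl_red_step_reduce:
  "reduced (rev st) \<Longrightarrow> foldl red_step st (reduce p) = foldl red_step st p"
proof (induction p rule: rev_induct)
  case (snoc l p)
  let ?st = "foldl red_step st (reduce p)"
  have "foldl red_step st (reduce (p @ [l])) = foldl red_step st (rev (red_step (rev (reduce p)) l))"
    by (simp add: reduce_def)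
  also have "\<dots> = red_step ?st l"
  proof (cases "rev (reduce p)")
    case (Cons a r)
    show ?thesis
    proof (cases "cancels a l")
      case True
      then have "red_step (rev (reduce p)) l = r" using Cons by (simp add: red_step_def)
      moreover have "reduce p = rev r @ [a]" using Cons by (metis rev_rev_ident rev.simps(2))
      moreover have "red_step (red_step (foldl red_step st (rev r)) a) (inv_letter a)
          = foldl red_step st (rev r)"
        by (intro red_step_cancel reduced_rev_foldl_red_step snoc.prems)
      ultimately show ?thesis
        using True by (simp add: cancels_iff)
    qed (use Cons in \<open>simp add: red_step_def\<close>)
  qed (simp add: red_step_def)
  finally show ?case using snoc by simp
qed (simp add: reduce_def)

lemma reduce_append_reduce: "reduce (p @ reduce q) = reduce (p @ q)"
proof -
  have "foldl red_step (foldl red_step [] p) (reduce q) = foldl red_step (foldl red_step [] p) q"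
    by (intro foldl_red_step_reduce reduced_rev_foldl_red_step) simp
  then show ?thesis by (simp add: reduce_def)
qed

definition fg_gens :: "nat \<Rightarrow> (nat \<times> bool) set" where
  "fg_gens d = {l. fst l < d}"

lemma finite_fg_gens [simp]: "finite (fg_gens d)"
proof -
  have "fg_gens d = {..<d} \<times> UNIV" by (auto simp: fg_gens_def)
  then show ?thesis by simp
qed

lemma inv_letter_in_fg_gens [simp]: "inv_letter l \<in> fg_gens d \<longleftrightarrow> l \<in> fg_gens d"
  by (simp add: fg_gens_def)

lemma reduced_if_in_fg_carrier: "g \<in> fg_carrier d \<Longrightarrow> reduced g"
  by (simp add: fg_carrier_def)

definition mul_letter :: "fgword \<Rightarrow> nat \<times> bool \<Rightarrow> fgword" where
  "mul_letter g l = rev (red_step (rev g) l)"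

lemma mul_letter_eq_reduce: "reduced g \<Longrightarrow> mul_letter g l = reduce (g @ [l])"
  by (simp add: mul_letter_def reduce_def foldl_red_step_reduced)

lemma fg_mult_Nil_right: "reduced g \<Longrightarrow> fg_mult g [] = g"
  by (simp add: fg_mult_def reduce_reduced)

lemma fg_mult_singleton: "reduced g \<Longrightarrow> fg_mult g [l] = mul_letter g l"
  by (simp add: fg_mult_def mul_letter_eq_reduce)

lemma mul_letter_in_fg_carrier:
  assumes "g \<in> fg_carrier d" "l \<in> fg_gens d"
  shows "mul_letter g l \<in> fg_carrier d"
proof -
  have "set (red_step (rev g) l) \<subseteq> insert l (set g)"
    by (cases "rev g") (auto simp: red_step_def)
  moreover have "reduced (mul_letter g l)"
    using reduced_rev_red_step[of "rev g" l] assms(1) by (simp add: mul_letter_def fg_carrier_def)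
  ultimately show ?thesis
    using assms by (auto simp: fg_carrier_def fg_gens_def mul_letter_def)
qed

lemma mul_letter_inv_letter: "reduced g \<Longrightarrow> mul_letter (mul_letter g l) (inv_letter l) = g"
  using red_step_cancel[of "rev g" l] by (simp add: mul_letter_def)

lemma length_mul_letter:
  "length (mul_letter g l) =
     (if g \<noteq> [] \<and> cancels (last g) l then length g - 1 else Suc (length g))"
  by (cases "rev g") (auto simp: mul_letter_def red_step_def last_rev[symmetric])

lemma mul_letter_no_cancel: "\<not> (g \<noteq> [] \<and> cancels (last g) l) \<Longrightarrow> mul_letter g l = g @ [l]"
  by (cases "rev g") (auto simp: mul_letter_def red_step_def last_rev[symmetric])

lemma reduce_append_mul_letter:
  assumes "reduced v"
  shows "reduce (p @ mul_letter v l) = mul_letter (reduce (p @ v)) l"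
proof -
  have "reduce (p @ mul_letter v l) = reduce (p @ v @ [l])"
    using assms by (simp add: mul_letter_eq_reduce reduce_append_reduce)
  then show ?thesis
    by (simp add: reduce_def mul_letter_def)
qed

lemma mul_letter_replicate_inv: "mul_letter (replicate (Suc k) a) (inv_letter a) = replicate k a"
proof -
  have "mul_letter (replicate k a) a = replicate (Suc k) a"
  proof (subst mul_letter_no_cancel)
    show "\<not> (replicate k a \<noteq> [] \<and> cancels (last (replicate k a)) a)"
      by (cases k) (simp_all add: cancels_def)
  qed (simp add: replicate_append_same)
  then show ?thesis
    using mul_letter_inv_letter[OF reduced_replicate] by metis
qed

definition fg_inv :: "fgword \<Rightarrow> fgword" where
  "fg_inv w = rev (map inv_letter w)"

lemma reduce_fg_inv_append: "reduce (fg_inv f @ f) = []"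
proof -
  have "reduced (rev st) \<Longrightarrow> foldl red_step st (fg_inv f @ f) = st" for st
  proof (induction f arbitrary: st)
    case (Cons a f)
    let ?st = "foldl red_step st (fg_inv f)"
    have "red_step (red_step ?st (inv_letter a)) a = ?st"
      using red_step_cancel[of ?st "inv_letter a"] reduced_rev_foldl_red_step[OF Cons.prems] by simp
    then show ?case using Cons by (simp add: fg_inv_def)
  qed (simp add: fg_inv_def)
  from this[of "[]"] show ?thesis by (simp add: reduce_def)
qed

definition fg_dist :: "fgword \<Rightarrow> fgword \<Rightarrow> nat" where
  "fg_dist f v = length (reduce (fg_inv f @ v))"

lemma fg_dist_self: "fg_dist f f = 0"
  by (simp add: fg_dist_def reduce_fg_inv_append)

lemma fg_dist_le_length: "fg_dist f v \<le> length f + length v"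
  using length_reduce_le[of "fg_inv f @ v"] by (simp add: fg_dist_def fg_inv_def)

lemma fg_dist_mul_letter:
  "reduced v \<Longrightarrow> fg_dist f (mul_letter v l) = length (mul_letter (reduce (fg_inv f @ v)) l)"
  by (simp add: fg_dist_def reduce_append_mul_letter)

lemma fg_dist_le_Suc_mul_letter: "reduced v \<Longrightarrow> fg_dist f v \<le> Suc (fg_dist f (mul_letter v l))"
  by (simp add: fg_dist_mul_letter length_mul_letter) (simp add: fg_dist_def)

definition nonbacktracking_ray :: "nat \<Rightarrow> (nat \<Rightarrow> fgword) \<Rightarrow> (nat \<Rightarrow> nat \<times> bool) \<Rightarrow> bool" where
  "nonbacktracking_ray d V S \<longleftrightarrow> V 0 \<in> fg_carrier d \<and>
     (\<forall>i. S i \<in> fg_gens d \<and> V (Suc i) = mul_letter (V i) (S i) \<and> \<not> cancels (S i) (S (Suc i)))"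

lemma nonbacktracking_ray_exists:
  assumes "g \<in> M" "M \<subseteq> fg_carrier d"
    and extend: "\<And>u p. u \<in> M \<Longrightarrow> \<exists>l \<in> fg_gens d. \<not> cancels p l \<and> mul_letter u l \<in> M"
  shows "\<exists>V S. nonbacktracking_ray d V S \<and> V 0 = g \<and> range V \<subseteq> M"
proof -
  define next_letter where
    "next_letter u p = (SOME l. l \<in> fg_gens d \<and> \<not> cancels p l \<and> mul_letter u l \<in> M)" for u p
  have next_letter_spec:
    "next_letter u p \<in> fg_gens d \<and> \<not> cancels p (next_letter u p) \<and> mul_letter u (next_letter u p) \<in> M"
    if "u \<in> M" for u p
    unfolding next_letter_def by (rule someI_ex) (use extend[OF that] in blast)
  define W where
    "W n = ((\<lambda>(u, p). (mul_letter u (next_letter u p), next_letter u p)) ^^ n) (g, undefined)" for n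
  define V where "V n = fst (W n)" for n
  define S where "S n = snd (W (Suc n))" for n
  have W_Suc:
    "W (Suc n) = (mul_letter (V n) (next_letter (V n) (snd (W n))), next_letter (V n) (snd (W n)))"
    for n
    by (simp add: W_def V_def split: prod.split)
  have S_eq: "S n = next_letter (V n) (snd (W n))" for n
    by (simp add: S_def W_Suc)
  have V_Suc: "V (Suc n) = mul_letter (V n) (S n)" for n
    by (simp add: V_def[of "Suc n"] W_Suc S_eq)
  have V_0: "V 0 = g" by (simp add: V_def W_def)
  have V_in: "V n \<in> M" for n
  proof (induction n)
    case (Suc n)
    then show ?case using next_letter_spec[OF Suc] by (simp add: V_Suc S_eq)
  qed (simp add: V_0 assms(1))
  have S_Suc: "S (Suc n) = next_letter (V (Suc n)) (S n)" for n
    by (simp only: S_eq[of "Suc n"] S_def[of n])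
  have "nonbacktracking_ray d V S"
    unfolding nonbacktracking_ray_def
  proof (intro conjI allI)
    show "V 0 \<in> fg_carrier d" using V_in assms(2) by blast
    fix i
    show "S i \<in> fg_gens d" using next_letter_spec[OF V_in] S_eq by simp
    show "V (Suc i) = mul_letter (V i) (S i)" by (rule V_Suc)
    show "\<not> cancels (S i) (S (Suc i))" using next_letter_spec[OF V_in, of "Suc i" "S i"] S_Suc by simp
  qed
  then show ?thesis using V_0 V_in by blast
qed

lemma nonbacktracking_ray_in_fg_carrier:
  "nonbacktracking_ray d V S \<Longrightarrow> V i \<in> fg_carrier d"
  by (induction i) (auto simp: nonbacktracking_ray_def intro: mul_letter_in_fg_carrier)

lemma reduce_fg_inv_ray:
  assumes ray: "nonbacktracking_ray d V S" and "i \<le> L"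
  shows "reduce (fg_inv (V L) @ V i) = fg_inv (map S [i..<L])"
  using assms(2)
proof (induction i rule: inc_induct)
  case base
  show ?case using reduce_fg_inv_append[of "V L"] by (simp add: fg_inv_def)
next
  case (step i)
  have reduced_V: "reduced (V k)" for k
    using ray by (intro reduced_if_in_fg_carrier nonbacktracking_ray_in_fg_carrier)
  have "V (Suc i) = mul_letter (V i) (S i)" using ray by (simp add: nonbacktracking_ray_def)
  then have "V i = mul_letter (V (Suc i)) (inv_letter (S i))"
    using mul_letter_inv_letter[OF reduced_V] by simp
  then have "reduce (fg_inv (V L) @ V i) = mul_letter (fg_inv (map S [Suc i..<L])) (inv_letter (S i))"
    using step.IH reduce_append_mul_letter[OF reduced_V] by simp
  also have "\<dots> = fg_inv (map S [Suc i..<L]) @ [inv_letter (S i)]"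
  proof (rule mul_letter_no_cancel)
    have "\<not> cancels (S i) (S (Suc i))" using ray by (simp add: nonbacktracking_ray_def)
    then show "\<not> (fg_inv (map S [Suc i..<L]) \<noteq> [] \<and>
        cancels (last (fg_inv (map S [Suc i..<L]))) (inv_letter (S i)))"
      by (cases "Suc i < L") (auto simp: fg_inv_def upt_conv_Cons cancels_iff)
  qed
  also have "\<dots> = fg_inv (map S [i..<L])"
    using step.hyps by (simp add: fg_inv_def upt_conv_Cons)
  finally show ?case .
qed

lemma fg_dist_ray: "nonbacktracking_ray d V S \<Longrightarrow> i \<le> L \<Longrightarrow> fg_dist (V L) (V i) = L - i"
  unfolding fg_dist_def by (simp add: reduce_fg_inv_ray) (simp add: fg_inv_def)

lemma length_ray_ge: "nonbacktracking_ray d V S \<Longrightarrow> L \<le> length (V 0) + length (V L)"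
  using fg_dist_ray[of d V S 0 L] fg_dist_le_length[of "V L" "V 0"] by simp

lemma ray_closer_neighbour:
  assumes ray: "nonbacktracking_ray d V S" and "i < L"
    and closer: "fg_dist (V L) (mul_letter (V i) l) < L - i"
  shows "l = S i"
proof -
  let ?w = "fg_inv (map S [i..<L])"
  have "fg_dist (V L) (mul_letter (V i) l) = length (mul_letter ?w l)"
    using fg_dist_mul_letter reduce_fg_inv_ray[OF ray] assms(2)
      reduced_if_in_fg_carrier[OF nonbacktracking_ray_in_fg_carrier[OF ray]] by simp
  with closer have "cancels (last ?w) l"
    by (auto simp: length_mul_letter fg_inv_def split: if_splits)
  moreover have "last ?w = inv_letter (S i)"
    using assms(2) by (simp add: fg_inv_def upt_conv_Cons)
  ultimately show ?thesis by (simp add: cancels_iff) (metis inv_letter_inv_letter)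
qed

lemma cdist_le_if_agree:
  assumes "\<And>g. g \<in> fg_carrier d \<Longrightarrow> length g \<le> n \<Longrightarrow> x g = y g"
  shows "cdist d x y \<le> (1/2) ^ Suc n"
proof (cases "\<forall>g \<in> fg_carrier d. x g = y g")
  case False
  let ?P = "\<lambda>k. \<exists>g \<in> fg_carrier d. word_len g = k \<and> x g \<noteq> y g"
  from False have "\<exists>k. ?P k" by blast
  then have "?P (LEAST k. ?P k)" by (rule LeastI_ex)
  then have "Suc n \<le> (LEAST k. ?P k)"
    using assms by (force simp: word_len_def)
  then have "(1/2::real) ^ (LEAST k. ?P k) \<le> (1/2) ^ Suc n"
    by (intro power_decreasing) auto
  then show ?thesis using False by (simp add: cdist_def)
qed (simp add: cdist_def)

lemma cdist_ge_if_differ: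
  assumes "g \<in> fg_carrier d" "x g \<noteq> y g"
  shows "(1/2) ^ length g \<le> cdist d x y"
proof -
  let ?P = "\<lambda>k. \<exists>g \<in> fg_carrier d. word_len g = k \<and> x g \<noteq> y g"
  have "(LEAST k. ?P k) \<le> length g"
    using assms by (intro Least_le) (auto simp: word_len_def)
  then have "(1/2::real) ^ length g \<le> (1/2) ^ (LEAST k. ?P k)"
    by (intro power_decreasing) auto
  then show ?thesis using assms by (auto simp: cdist_def)
qed

lemma agree_if_cdist_le:
  assumes "cdist d x y \<le> (1/2) ^ Suc n" "g \<in> fg_carrier d" "length g \<le> n"
  shows "x g = y g"
proof (rule ccontr)
  assume "x g \<noteq> y g"
  with assms(2) have "(1/2) ^ length g \<le> cdist d x y" by (rule cdist_ge_if_differ)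
  moreover have "(1/2::real) ^ n \<le> (1/2) ^ length g" using assms(3) by (intro power_decreasing) auto
  moreover have "(1/2::real) ^ Suc n < (1/2) ^ n" by simp
  ultimately show False using assms(1) by linarith
qed

subsection \<open>The automaton\<close>

text \<open>A state \<open>c\<close> encodes a shape \<open>c div 2\<close> and a bit \<open>c mod 2\<close>. Shape 0 is blank,
  shape 1 is active, and shape \<^term>\<open>wall l\<close> is active as well, but additionally seals the
  edge towards the neighbour across \<open>l\<close> if that neighbour is blank.\<close>

abbreviation shape :: "nat \<Rightarrow> nat" where
  "shape c \<equiv> c div 2"

definition letter_code :: "nat \<times> bool \<Rightarrow> nat" where
  "letter_code l = 2 * fst l + (if snd l then 1 else 0)"

definition wall :: "nat \<times> bool \<Rightarrow> nat" where
  "wall l = 2 + letter_code l"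

lemma wall_eq_iff [simp]: "wall l = wall l' \<longleftrightarrow> l = l'"
  by (cases l; cases l') (auto simp: wall_def letter_code_def split: if_splits; presburger)

lemma wall_neq [simp]: "wall l \<noteq> 0" "wall l \<noteq> 1"
  by (simp_all add: wall_def)

lemma wall_less: "l \<in> fg_gens d \<Longrightarrow> wall l < 2 * d + 2"
  by (cases l) (auto simp: wall_def letter_code_def fg_gens_def)

definition sealed :: "nat \<Rightarrow> nat \<Rightarrow> nat \<times> bool \<Rightarrow> bool" where
  "sealed c n l \<longleftrightarrow>
     shape c = 0 \<and> shape n = wall (inv_letter l) \<or> shape c = wall l \<and> shape n = 0"

definition next_shape :: "nat \<Rightarrow> nat \<Rightarrow> (nat \<times> bool \<Rightarrow> nat) \<Rightarrow> nat" where
  "next_shape d c nb =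
     (if shape c \<noteq> 0 then shape c
      else if \<exists>l \<in> fg_gens d. shape (nb l) \<noteq> 0 \<and> shape (nb l) \<noteq> wall (inv_letter l) then 1
      else 0)"

definition next_bit :: "nat \<Rightarrow> nat \<Rightarrow> (nat \<times> bool \<Rightarrow> nat) \<Rightarrow> nat" where
  "next_bit d c nb = card {l \<in> fg_gens d. \<not> sealed c (nb l) l \<and> odd (nb l)} mod 2"

definition local_map :: "nat \<Rightarrow> nat \<Rightarrow> (nat \<times> bool \<Rightarrow> nat) \<Rightarrow> nat" where
  "local_map d c nb = 2 * next_shape d c nb + next_bit d c nb"

lemma shape_local_map [simp]: "shape (local_map d c nb) = next_shape d c nb"
  by (simp add: local_map_def next_bit_def)

lemma local_map_mod_2 [simp]: "local_map d c nb mod 2 = next_bit d c nb"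
  by (simp add: local_map_def next_bit_def)

lemma local_map_cong:
  assumes "\<And>l. l \<in> fg_gens d \<Longrightarrow> nb l = nb' l"
  shows "local_map d c nb = local_map d c nb'"
proof -
  have "{l \<in> fg_gens d. \<not> sealed c (nb l) l \<and> odd (nb l)} =
      {l \<in> fg_gens d. \<not> sealed c (nb' l) l \<and> odd (nb' l)}"
    using assms by auto
  moreover have "(\<exists>l \<in> fg_gens d. shape (nb l) \<noteq> 0 \<and> shape (nb l) \<noteq> wall (inv_letter l)) \<longleftrightarrow>
      (\<exists>l \<in> fg_gens d. shape (nb' l) \<noteq> 0 \<and> shape (nb' l) \<noteq> wall (inv_letter l))"
    using assms by auto
  ultimately show ?thesis by (simp add: local_map_def next_shape_def next_bit_def)
qed

definition wall_nbhd :: "nat \<Rightarrow> fgword set" where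
  "wall_nbhd d = insert [] ((\<lambda>l. [l]) ` fg_gens d)"

definition wall_rule :: "nat \<Rightarrow> (fgword \<Rightarrow> nat) \<Rightarrow> nat" where
  "wall_rule d p = local_map d (p []) (\<lambda>l. p [l])"

definition wall_alphabet :: "nat \<Rightarrow> nat set" where
  "wall_alphabet d = {..< 4 * d + 4}"

abbreviation wall_ca :: "nat \<Rightarrow> (fgword \<Rightarrow> nat) \<Rightarrow> fgword \<Rightarrow> nat" where
  "wall_ca d \<equiv> ca (wall_nbhd d) (wall_rule d)"

lemma wall_nbhd_subset: "wall_nbhd d \<subseteq> fg_carrier d"
  by (auto simp: wall_nbhd_def fg_carrier_def fg_gens_def)

lemma wall_ca_apply:
  assumes "g \<in> fg_carrier d"
  shows "wall_ca d x g = local_map d (x g) (\<lambda>l. x (mul_letter g l))"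
proof -
  have "reduced g" using assms by (rule reduced_if_in_fg_carrier)
  then show ?thesis
    unfolding ca_def wall_rule_def
    by (auto simp: wall_nbhd_def fg_mult_Nil_right fg_mult_singleton intro: local_map_cong)
qed

lemma local_map_less:
  assumes "c < 4 * d + 4"
  shows "local_map d c nb < 4 * d + 4"
proof -
  have "next_shape d c nb \<le> 2 * d + 1"
    using assms by (auto simp: next_shape_def)
  then show ?thesis by (simp add: local_map_def next_bit_def)
qed

lemma local_rule_wall_rule: "local_rule (wall_alphabet d) (wall_nbhd d) (wall_rule d)"
  unfolding local_rule_def wall_rule_def wall_alphabet_def
proof
  fix p assume "p \<in> wall_nbhd d \<rightarrow>\<^sub>E {..<4 * d + 4}"
  then have "p [] < 4 * d + 4" by (auto simp: wall_nbhd_def)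
  then show "local_map d (p []) (\<lambda>l. p [l]) \<in> {..<4 * d + 4}" by (simp add: local_map_less)
qed

lemma funpow_wall_ca_in_configs:
  "x \<in> configs d (wall_alphabet d) \<Longrightarrow> (wall_ca d ^^ t) x \<in> configs d (wall_alphabet d)"
  by (induction t) (auto simp: configs_def wall_ca_apply wall_alphabet_def local_map_less)

lemma shape_wall_ca:
  "g \<in> fg_carrier d \<Longrightarrow> shape (wall_ca d z g) = next_shape d (z g) (\<lambda>l. z (mul_letter g l))"
  by (simp add: wall_ca_apply)

lemma shape_wall_ca_nonblank:
  "g \<in> fg_carrier d \<Longrightarrow> shape (z g) \<noteq> 0 \<Longrightarrow> shape (wall_ca d z g) = shape (z g)"
  by (simp add: shape_wall_ca next_shape_def)

lemma shape_wall_ca_activated: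
  "g \<in> fg_carrier d \<Longrightarrow> shape (z g) = 0 \<Longrightarrow> shape (wall_ca d z g) \<noteq> 0 \<Longrightarrow> shape (wall_ca d z g) = 1"
  by (simp add: shape_wall_ca next_shape_def split: if_splits)

lemma shape_wall_ca_intruded:
  assumes "g \<in> fg_carrier d" "shape (z g) = 0" "l \<in> fg_gens d"
    and "shape (z (mul_letter g l)) \<noteq> 0" "shape (z (mul_letter g l)) \<noteq> wall (inv_letter l)"
  shows "shape (wall_ca d z g) \<noteq> 0"
  using assms by (auto simp: shape_wall_ca next_shape_def)

lemma shape_funpow_wall_ca_stable:
  assumes "g \<in> fg_carrier d" "shape ((wall_ca d ^^ s) z g) \<noteq> 0" "s \<le> t"
  shows "shape ((wall_ca d ^^ t) z g) = shape ((wall_ca d ^^ s) z g)"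
  using assms(3)
proof (induction t rule: dec_induct)
  case (step t)
  then show ?case
    using shape_wall_ca_nonblank[OF assms(1), of "(wall_ca d ^^ t) z"] assms(2) by simp
qed simp

lemma shape_funpow_wall_ca_eq:
  assumes "\<And>v. v \<in> fg_carrier d \<Longrightarrow> shape (z1 v) = shape (z2 v)" "g \<in> fg_carrier d"
  shows "shape ((wall_ca d ^^ t) z1 g) = shape ((wall_ca d ^^ t) z2 g)"
  using assms(2)
proof (induction t arbitrary: g)
  case (Suc t)
  then have "next_shape d ((wall_ca d ^^ t) z1 g) (\<lambda>l. (wall_ca d ^^ t) z1 (mul_letter g l)) =
      next_shape d ((wall_ca d ^^ t) z2 g) (\<lambda>l. (wall_ca d ^^ t) z2 (mul_letter g l))"
    unfolding next_shape_def using mul_letter_in_fg_carrier by (simp cong: bex_cong)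
  then show ?case using Suc.prems by (simp add: shape_wall_ca)
qed (use assms(1) in simp)

lemma even_card_add_iff:
  assumes "finite A"
  shows "even (card {x \<in> A. P x} + card {x \<in> A. Q x}) \<longleftrightarrow> even (card {x \<in> A. P x \<noteq> Q x})"
proof -
  let ?X = "{x \<in> A. P x}" and ?Y = "{x \<in> A. Q x}" and ?D = "{x \<in> A. P x \<noteq> Q x}"
  have "card ?X + card ?Y = card (?X \<union> ?Y) + card (?X \<inter> ?Y)"
    using assms by (intro card_Un_Int) auto
  moreover have "card (?X \<union> ?Y) = card ?D + card (?X \<inter> ?Y)"
  proof -
    have "?X \<union> ?Y = ?D \<union> (?X \<inter> ?Y)" by auto
    then show ?thesis using assms by (simp add: card_Un_disjoint disjoint_iff)
  qed
  ultimately have "card ?X + card ?Y = card ?D + 2 * card (?X \<inter> ?Y)" by simp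
  then show ?thesis by simp
qed

lemma bit_wall_ca_differs_iff:
  assumes shapes: "\<And>v. v \<in> fg_carrier d \<Longrightarrow> shape (z1 v) = shape (z2 v)" and g: "g \<in> fg_carrier d"
  shows "wall_ca d z1 g mod 2 \<noteq> wall_ca d z2 g mod 2 \<longleftrightarrow>
    odd (card {l \<in> fg_gens d. \<not> sealed (z1 g) (z1 (mul_letter g l)) l \<and>
                              z1 (mul_letter g l) mod 2 \<noteq> z2 (mul_letter g l) mod 2})"
proof -
  define C where "C = {l \<in> fg_gens d. \<not> sealed (z1 g) (z1 (mul_letter g l)) l}"
  have "sealed (z2 g) (z2 (mul_letter g l)) l = sealed (z1 g) (z1 (mul_letter g l)) l"
    if "l \<in> fg_gens d" for l
    using shapes g mul_letter_in_fg_carrier[OF g that] by (simp add: sealed_def)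
  then have sets: "{l \<in> fg_gens d. \<not> sealed (z g) (z (mul_letter g l)) l \<and> odd (z (mul_letter g l))}
      = {l \<in> C. odd (z (mul_letter g l))}" if "z = z1 \<or> z = z2" for z
    using that unfolding C_def by auto
  have bits: "wall_ca d z g mod 2 = card {l \<in> C. odd (z (mul_letter g l))} mod 2"
    if "z = z1 \<or> z = z2" for z
    using g sets[OF that] by (simp add: wall_ca_apply next_bit_def)
  have parity: "a mod 2 \<noteq> b mod 2 \<longleftrightarrow> odd (a + b)" for a b :: nat
    by presburger
  have "finite C" by (simp add: C_def)
  have "wall_ca d z1 g mod 2 \<noteq> wall_ca d z2 g mod 2 \<longleftrightarrow>
      odd (card {l \<in> C. odd (z1 (mul_letter g l))} + card {l \<in> C. odd (z2 (mul_letter g l))})"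
    unfolding bits[of z1, simplified] bits[of z2, simplified] by (rule parity)
  also have "\<dots> \<longleftrightarrow> odd (card {l \<in> C. odd (z1 (mul_letter g l)) \<noteq> odd (z2 (mul_letter g l))})"
    by (simp only: even_card_add_iff[OF \<open>finite C\<close>])
  also have "{l \<in> C. odd (z1 (mul_letter g l)) \<noteq> odd (z2 (mul_letter g l))} =
      {l \<in> fg_gens d. \<not> sealed (z1 g) (z1 (mul_letter g l)) l \<and>
                       z1 (mul_letter g l) mod 2 \<noteq> z2 (mul_letter g l) mod 2}"
    by (auto simp: C_def odd_iff_mod_2_eq_one)
  finally show ?thesis .
qed

subsection \<open>Sealed balls: the automaton is not sensitive\<close>

text \<open>The walls on the boundary sphere face inwards, so they seal every edge leaving the ball.\<close>

definition sealed_ball :: "nat \<Rightarrow> fgword \<Rightarrow> nat" where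
  "sealed_ball \<rho> v =
     (if length v \<le> \<rho> then 0
      else if length v = Suc \<rho> then 2 * wall (inv_letter (last v))
      else 2)"

lemma sealed_ball_in_configs: "sealed_ball \<rho> \<in> configs d (wall_alphabet d)"
proof -
  have "sealed_ball \<rho> v < 4 * d + 4" if "v \<in> fg_carrier d" for v
  proof (cases "length v = Suc \<rho>")
    case True
    then have "last v \<in> set v" by (intro last_in_set) auto
    with that have "inv_letter (last v) \<in> fg_gens d" by (auto simp: fg_carrier_def fg_gens_def)
    then show ?thesis using wall_less by (fastforce simp: sealed_ball_def)
  qed (simp add: sealed_ball_def)
  then show ?thesis by (simp add: configs_def wall_alphabet_def)
qed

lemma shape_sealed_ball_mul_letter:
  assumes "length v \<le> \<rho>"
  shows "length (mul_letter v l) \<le> \<rho> \<and> shape (sealed_ball \<rho> (mul_letter v l)) = 0 \<or>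
         length (mul_letter v l) = Suc \<rho> \<and> shape (sealed_ball \<rho> (mul_letter v l)) = wall (inv_letter l)"
proof (cases "v \<noteq> [] \<and> cancels (last v) l")
  case True
  then show ?thesis using assms by (simp add: length_mul_letter sealed_ball_def)
next
  case False
  then show ?thesis using assms by (simp add: mul_letter_no_cancel sealed_ball_def)
qed

definition seals_ball :: "nat \<Rightarrow> nat \<Rightarrow> (fgword \<Rightarrow> nat) \<Rightarrow> bool" where
  "seals_ball d \<rho> z \<longleftrightarrow>
     (\<forall>u \<in> fg_carrier d. length u \<le> Suc \<rho> \<longrightarrow> shape (z u) = shape (sealed_ball \<rho> u))"

lemma seals_ball_wall_ca:
  assumes z: "seals_ball d \<rho> z"
  shows "seals_ball d \<rho> (wall_ca d z)"
  unfolding seals_ball_def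
proof (intro ballI impI)
  fix v assume v: "v \<in> fg_carrier d" "length v \<le> Suc \<rho>"
  show "shape (wall_ca d z v) = shape (sealed_ball \<rho> v)"
  proof (cases "length v \<le> \<rho>")
    case True
    have "shape (z (mul_letter v l)) = 0 \<or> shape (z (mul_letter v l)) = wall (inv_letter l)"
      if "l \<in> fg_gens d" for l
      using shape_sealed_ball_mul_letter[OF True, of l] z mul_letter_in_fg_carrier[OF v(1) that]
      by (auto simp: seals_ball_def)
    then show ?thesis
      using True z v by (auto simp: shape_wall_ca next_shape_def sealed_ball_def seals_ball_def)
  next
    case False
    then show ?thesis
      using z v shape_wall_ca_nonblank[OF v(1), of z] by (simp add: sealed_ball_def seals_ball_def)
  qed
qed

lemma seals_ball_funpow_wall_ca: "seals_ball d \<rho> z \<Longrightarrow> seals_ball d \<rho> ((wall_ca d ^^ t) z)"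
  by (induction t) (simp_all add: seals_ball_wall_ca)

lemma wall_ca_eq_inside_sealed_ball:
  assumes z1: "seals_ball d \<rho> z1" and z2: "seals_ball d \<rho> z2"
    and eq: "\<And>u. u \<in> fg_carrier d \<Longrightarrow> length u \<le> \<rho> \<Longrightarrow> z1 u = z2 u"
    and v: "v \<in> fg_carrier d" "length v \<le> \<rho>"
  shows "wall_ca d z1 v = wall_ca d z2 v"
proof -
  have "\<not> sealed (z1 v) (z1 (mul_letter v l)) l \<and> odd (z1 (mul_letter v l)) \<longleftrightarrow>
      \<not> sealed (z2 v) (z2 (mul_letter v l)) l \<and> odd (z2 (mul_letter v l))"
    if l: "l \<in> fg_gens d" for l
  proof -
    have u: "mul_letter v l \<in> fg_carrier d" using v(1) l by (rule mul_letter_in_fg_carrier)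
    have blank: "shape (z1 v) = 0" "shape (z2 v) = 0"
      using z1 z2 v by (auto simp: sealed_ball_def seals_ball_def)
    from shape_sealed_ball_mul_letter[OF v(2), of l] show ?thesis
    proof
      assume "length (mul_letter v l) \<le> \<rho> \<and> shape (sealed_ball \<rho> (mul_letter v l)) = 0"
      then show ?thesis using eq[OF u] eq[OF v] by simp
    next
      assume "length (mul_letter v l) = Suc \<rho> \<and>
          shape (sealed_ball \<rho> (mul_letter v l)) = wall (inv_letter l)"
      then show ?thesis using z1 z2 u blank by (simp add: sealed_def seals_ball_def)
    qed
  qed
  then have "next_bit d (z1 v) (\<lambda>l. z1 (mul_letter v l)) = next_bit d (z2 v) (\<lambda>l. z2 (mul_letter v l))"
    unfolding next_bit_def by (metis (no_types, lifting) Collect_cong)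
  moreover have "shape (wall_ca d z1 v) = shape (wall_ca d z2 v)"
    using seals_ball_wall_ca[OF z1] seals_ball_wall_ca[OF z2] v by (simp add: seals_ball_def)
  ultimately show ?thesis
    using v(1) by (simp add: wall_ca_apply local_map_def)
qed

lemma funpow_wall_ca_eq_inside_sealed_ball:
  assumes "seals_ball d \<rho> z1" "seals_ball d \<rho> z2"
    and "\<And>u. u \<in> fg_carrier d \<Longrightarrow> length u \<le> \<rho> \<Longrightarrow> z1 u = z2 u"
  shows "v \<in> fg_carrier d \<Longrightarrow> length v \<le> \<rho> \<Longrightarrow> (wall_ca d ^^ t) z1 v = (wall_ca d ^^ t) z2 v"
proof (induction t arbitrary: v)
  case (Suc t)
  show ?case
    using wall_ca_eq_inside_sealed_ball[OF seals_ball_funpow_wall_ca[OF assms(1)]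
        seals_ball_funpow_wall_ca[OF assms(2)] Suc.IH Suc.prems]
    by simp
qed (use assms in simp)

lemma not_sensitive_wall_ca: "\<not> sensitive d (wall_alphabet d) (wall_ca d)"
proof -
  have "\<exists>x \<in> configs d (wall_alphabet d). \<exists>\<delta>>0. \<forall>t. \<forall>y \<in> cball_c d (wall_alphabet d) x \<delta>.
          (wall_ca d ^^ t) y \<in> cball_c d (wall_alphabet d) ((wall_ca d ^^ t) x) \<epsilon>"
    if "\<epsilon> > 0" for \<epsilon> :: real
  proof -
    obtain \<rho> where "(1/2::real) ^ \<rho> < \<epsilon>" using real_arch_pow_inv[OF \<open>\<epsilon> > 0\<close>, of "1/2"] by auto
    then have \<rho>: "(1/2::real) ^ Suc \<rho> \<le> \<epsilon>" using \<open>\<epsilon> > 0\<close> by simp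
    have "(wall_ca d ^^ t) y \<in> cball_c d (wall_alphabet d) ((wall_ca d ^^ t) (sealed_ball \<rho>)) \<epsilon>"
      if y: "y \<in> cball_c d (wall_alphabet d) (sealed_ball \<rho>) ((1/2) ^ Suc (Suc \<rho>))" for t y
    proof -
      have agree: "y u = sealed_ball \<rho> u" if "u \<in> fg_carrier d" "length u \<le> Suc \<rho>" for u
        using agree_if_cdist_le[of d "sealed_ball \<rho>" y "Suc \<rho>"] y that by (simp add: cball_c_def)
      then have "seals_ball d \<rho> y" by (simp add: seals_ball_def)
      moreover have "seals_ball d \<rho> (sealed_ball \<rho>)" by (simp add: seals_ball_def)
      ultimately have "cdist d ((wall_ca d ^^ t) (sealed_ball \<rho>)) ((wall_ca d ^^ t) y) \<le> (1/2) ^ Suc \<rho>"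
        using agree by (intro cdist_le_if_agree funpow_wall_ca_eq_inside_sealed_ball) auto
      then show ?thesis
        using \<rho> y funpow_wall_ca_in_configs by (auto simp: cball_c_def)
    qed
    then show ?thesis
      using sealed_ball_in_configs
      by (intro bexI[of _ "sealed_ball \<rho>"] exI[of _ "(1/2) ^ Suc (Suc \<rho>)"]) auto
  qed
  then show ?thesis by (auto simp: sensitive_def)
qed

subsection \<open>Cells that eventually become active\<close>

definition ever_nonblank :: "nat \<Rightarrow> (fgword \<Rightarrow> nat) \<Rightarrow> fgword set" where
  "ever_nonblank d z = {u \<in> fg_carrier d. \<exists>t. shape ((wall_ca d ^^ t) z u) \<noteq> 0}"

text \<open>A blank cell activated by its neighbour \<open>u\<close> is shielded from it only if \<open>u\<close> is a wall
  facing it at the moment of its activation, and activation produces shape 1, never a wall;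
  so \<open>u\<close> must have been that wall from the start.\<close>
lemma mul_letter_in_ever_nonblank:
  assumes u: "u \<in> ever_nonblank d z" and l: "l \<in> fg_gens d" and not_wall: "shape (z u) \<noteq> wall l"
  shows "mul_letter u l \<in> ever_nonblank d z"
proof (rule ccontr)
  assume never: "mul_letter u l \<notin> ever_nonblank d z"
  have uc: "u \<in> fg_carrier d" using u by (simp add: ever_nonblank_def)
  have nc: "mul_letter u l \<in> fg_carrier d" using uc l by (rule mul_letter_in_fg_carrier)
  obtain k where k: "shape ((wall_ca d ^^ k) z u) \<noteq> 0"
    and before: "\<And>t. t < k \<Longrightarrow> shape ((wall_ca d ^^ t) z u) = 0"
    using u exists_least_iff[of "\<lambda>t. shape ((wall_ca d ^^ t) z u) \<noteq> 0"]
    by (auto simp: ever_nonblank_def)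
  have "shape ((wall_ca d ^^ k) z u) = wall l"
  proof (rule ccontr)
    assume "shape ((wall_ca d ^^ k) z u) \<noteq> wall l"
    then have "shape (wall_ca d ((wall_ca d ^^ k) z) (mul_letter u l)) \<noteq> 0"
      using shape_wall_ca_intruded[OF nc _ inv_letter_in_fg_gens[THEN iffD2, OF l]] never nc k
        mul_letter_inv_letter[OF reduced_if_in_fg_carrier[OF uc]]
      by (auto simp: ever_nonblank_def)
    moreover have "shape ((wall_ca d ^^ Suc k) z (mul_letter u l)) = 0"
      using never nc unfolding ever_nonblank_def by blast
    ultimately show False by simp
  qed
  moreover have "k = 0"
  proof (rule ccontr)
    assume "k \<noteq> 0"
    then obtain k' where "k = Suc k'" by (cases k) auto
    moreover have "shape ((wall_ca d ^^ k') z u) = 0" using before \<open>k = Suc k'\<close> by simp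
    ultimately have "shape ((wall_ca d ^^ k) z u) = 1"
      using shape_wall_ca_activated[OF uc, of "(wall_ca d ^^ k') z"] k by simp
    with \<open>shape ((wall_ca d ^^ k) z u) = wall l\<close> show False by (simp add: wall_def)
  qed
  ultimately show False using not_wall by simp
qed

lemma ever_nonblank_extend:
  assumes "2 \<le> d" "u \<in> ever_nonblank d z"
  shows "\<exists>l \<in> fg_gens d. \<not> cancels p l \<and> mul_letter u l \<in> ever_nonblank d z"
proof -
  define i where "i = (if fst p = 0 then 1 else 0 :: nat)"
  have "(i, True) \<in> fg_gens d" "(i, False) \<in> fg_gens d" "\<not> cancels p (i, True)" "\<not> cancels p (i, False)"
    using assms(1) by (auto simp: i_def fg_gens_def cancels_def)
  moreover have "shape (z u) \<noteq> wall (i, True) \<or> shape (z u) \<noteq> wall (i, False)"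
    by auto
  ultimately show ?thesis
    using mul_letter_in_ever_nonblank[OF assms(2)] by blast
qed

definition activate_outside :: "nat \<Rightarrow> (fgword \<Rightarrow> nat) \<Rightarrow> fgword \<Rightarrow> nat" where
  "activate_outside R x v = (if length v \<le> R then x v else 2)"

text \<open>If \<open>x\<close> is blank everywhere, the modified configuration contains no walls, so activity
  spreads inwards from outside the ball all the way to the origin.\<close>
lemma ever_nonblank_anchor:
  assumes "2 \<le> d"
  obtains g where "g \<in> fg_carrier d" "\<And>R. length g \<le> R \<Longrightarrow> g \<in> ever_nonblank d (activate_outside R x)"
proof (cases "\<exists>g \<in> fg_carrier d. shape (x g) \<noteq> 0")
  case True
  then obtain g where "g \<in> fg_carrier d" "shape (x g) \<noteq> 0" by blast
  then show ?thesis
    by (intro that) (auto simp: ever_nonblank_def activate_outside_def intro!: exI[of _ 0])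
next
  case False
  let ?a = "(0::nat, True)"
  have a: "?a \<in> fg_gens d" "inv_letter ?a \<in> fg_gens d" using assms by (auto simp: fg_gens_def)
  have rep: "replicate k ?a \<in> fg_carrier d" for k
    using a by (auto simp: fg_carrier_def reduced_replicate fg_gens_def)
  have "[] \<in> ever_nonblank d (activate_outside R x)" for R
  proof -
    let ?z = "activate_outside R x"
    have no_wall: "shape (?z u) \<noteq> wall l" if "u \<in> fg_carrier d" for u l
      using False that by (auto simp: activate_outside_def wall_def)
    have "replicate k ?a \<in> ever_nonblank d ?z" if "k \<le> Suc R" for k
      using that
    proof (induction k rule: inc_induct)
      case base
      show ?case
        using rep[of "Suc R"] by (auto simp: ever_nonblank_def activate_outside_def intro!: exI[of _ 0])
    next
      case (step k)
      have "mul_letter (replicate (Suc k) ?a) (inv_letter ?a) \<in> ever_nonblank d ?z"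
        using mul_letter_in_ever_nonblank[OF step.IH a(2) no_wall[OF rep]] .
      then show ?case by (simp only: mul_letter_replicate_inv)
    qed
    from this[of 0] show ?thesis by simp
  qed
  then show ?thesis by (intro that[of "[]"]) (auto simp: fg_carrier_def)
qed

subsection \<open>Propagation of a flipped bit\<close>

lemma bit_difference_light_cone:
  assumes shapes: "\<And>v. v \<in> fg_carrier d \<Longrightarrow> shape (z1 v) = shape (z2 v)"
    and eq: "\<And>v. v \<in> fg_carrier d \<Longrightarrow> v \<noteq> f \<Longrightarrow> z1 v = z2 v"
  shows "v \<in> fg_carrier d \<Longrightarrow> (wall_ca d ^^ t) z1 v mod 2 \<noteq> (wall_ca d ^^ t) z2 v mod 2 \<Longrightarrow>
    fg_dist f v \<le> t"
proof (induction t arbitrary: v)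
  case 0
  then have "v = f" using eq by (metis funpow_0)
  then show ?case by (simp add: fg_dist_self)
next
  case (Suc t)
  let ?z1 = "(wall_ca d ^^ t) z1" and ?z2 = "(wall_ca d ^^ t) z2"
  have shapes_t: "shape (?z1 u) = shape (?z2 u)" if "u \<in> fg_carrier d" for u
    using shape_funpow_wall_ca_eq[OF shapes that] .
  have "wall_ca d ?z1 v mod 2 \<noteq> wall_ca d ?z2 v mod 2" using Suc.prems by simp
  then have "odd (card {l \<in> fg_gens d. \<not> sealed (?z1 v) (?z1 (mul_letter v l)) l \<and>
      ?z1 (mul_letter v l) mod 2 \<noteq> ?z2 (mul_letter v l) mod 2})"
    using bit_wall_ca_differs_iff[of d "?z1" "?z2" v, OF shapes_t Suc.prems(1)] by blast
  then have "{l \<in> fg_gens d. \<not> sealed (?z1 v) (?z1 (mul_letter v l)) l \<and>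
      ?z1 (mul_letter v l) mod 2 \<noteq> ?z2 (mul_letter v l) mod 2} \<noteq> {}"
    by (intro notI) simp
  then obtain l where l: "l \<in> fg_gens d"
    and differs: "?z1 (mul_letter v l) mod 2 \<noteq> ?z2 (mul_letter v l) mod 2" by blast
  have "fg_dist f (mul_letter v l) \<le> t"
    using Suc.IH[OF mul_letter_in_fg_carrier[OF Suc.prems(1) l] differs] .
  moreover have "fg_dist f v \<le> Suc (fg_dist f (mul_letter v l))"
    using Suc.prems(1) by (intro fg_dist_le_Suc_mul_letter reduced_if_in_fg_carrier)
  ultimately show ?case by simp
qed


lemma differing_neighbour_on_ray:
  assumes ray: "nonbacktracking_ray d V S"
    and shapes: "\<And>v. v \<in> fg_carrier d \<Longrightarrow> shape (z1 v) = shape (z2 v)"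
    and eq: "\<And>v. v \<in> fg_carrier d \<Longrightarrow> v \<noteq> V L \<Longrightarrow> z1 v = z2 v"
    and "i < L" "l \<in> fg_gens d"
    and differs: "(wall_ca d ^^ (L - Suc i)) z1 (mul_letter (V i) l) mod 2 \<noteq>
                  (wall_ca d ^^ (L - Suc i)) z2 (mul_letter (V i) l) mod 2"
  shows "l = S i"
proof -
  have "mul_letter (V i) l \<in> fg_carrier d"
    using ray \<open>l \<in> fg_gens d\<close> by (intro mul_letter_in_fg_carrier nonbacktracking_ray_in_fg_carrier)
  then have "fg_dist (V L) (mul_letter (V i) l) \<le> L - Suc i"
    using bit_difference_light_cone[of d z1 z2 "V L", OF shapes eq] differs by blast
  with \<open>i < L\<close> show ?thesis by (intro ray_closer_neighbour[OF ray]) auto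
qed

text \<open>Along the ray the edges are unsealed, since both of their ends are active, and by the
  light cone lemma each cell \<open>V i\<close> sees the difference through exactly one neighbour,
  namely \<open>V (Suc i)\<close>; an odd number of differing neighbours flips the bit.\<close>
lemma bit_difference_along_ray:
  assumes ray: "nonbacktracking_ray d V S"
    and shapes: "\<And>v. v \<in> fg_carrier d \<Longrightarrow> shape (z1 v) = shape (z2 v)"
    and eq: "\<And>v. v \<in> fg_carrier d \<Longrightarrow> v \<noteq> V L \<Longrightarrow> z1 v = z2 v"
    and differs: "z1 (V L) mod 2 \<noteq> z2 (V L) mod 2"
    and active: "\<And>i. i \<le> L \<Longrightarrow> shape ((wall_ca d ^^ (L - Suc i)) z1 (V i)) \<noteq> 0"
  shows "j \<le> L \<Longrightarrow> (wall_ca d ^^ j) z1 (V (L - j)) mod 2 \<noteq> (wall_ca d ^^ j) z2 (V (L - j)) mod 2"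
proof (induction j)
  case 0
  then show ?case using differs by simp
next
  case (Suc j)
  define i where "i = L - Suc j"
  have i: "L - j = Suc i" "i < L" "L - Suc i = j" using Suc.prems by (auto simp: i_def)
  let ?z1 = "(wall_ca d ^^ j) z1" and ?z2 = "(wall_ca d ^^ j) z2"
  have carrier: "V k \<in> fg_carrier d" for k using ray by (rule nonbacktracking_ray_in_fg_carrier)
  have ray_step: "mul_letter (V i) (S i) = V (Suc i)" "S i \<in> fg_gens d"
    using ray by (simp_all add: nonbacktracking_ray_def)
  have shapes_j: "shape (?z1 u) = shape (?z2 u)" if "u \<in> fg_carrier d" for u
    using shape_funpow_wall_ca_eq[OF shapes that] .
  have "{l \<in> fg_gens d. \<not> sealed (?z1 (V i)) (?z1 (mul_letter (V i) l)) l \<and>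
      ?z1 (mul_letter (V i) l) mod 2 \<noteq> ?z2 (mul_letter (V i) l) mod 2} = {S i}"
  proof (intro equalityI subsetI)
    fix l
    assume "l \<in> {l \<in> fg_gens d. \<not> sealed (?z1 (V i)) (?z1 (mul_letter (V i) l)) l \<and>
      ?z1 (mul_letter (V i) l) mod 2 \<noteq> ?z2 (mul_letter (V i) l) mod 2}"
    then have "l \<in> fg_gens d" "?z1 (mul_letter (V i) l) mod 2 \<noteq> ?z2 (mul_letter (V i) l) mod 2"
      by auto
    then show "l \<in> {S i}" using differing_neighbour_on_ray[OF ray shapes eq i(2)] i(3) by simp
  next
    fix l
    assume "l \<in> {S i}"
    have "shape (?z1 (V i)) \<noteq> 0" using active[of i] i by simp
    moreover have "shape (?z1 (V (Suc i))) \<noteq> 0"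
      using active[of "Suc i"] i
        shape_funpow_wall_ca_stable[of "V (Suc i)" d "L - Suc (Suc i)" z1 j, OF carrier]
      by simp
    moreover have "?z1 (V (Suc i)) mod 2 \<noteq> ?z2 (V (Suc i)) mod 2"
      using Suc i by simp
    ultimately show "l \<in> {l \<in> fg_gens d. \<not> sealed (?z1 (V i)) (?z1 (mul_letter (V i) l)) l \<and>
      ?z1 (mul_letter (V i) l) mod 2 \<noteq> ?z2 (mul_letter (V i) l) mod 2}"
      using \<open>l \<in> {S i}\<close> ray_step by (auto simp: sealed_def)
  qed
  then have "wall_ca d ?z1 (V i) mod 2 \<noteq> wall_ca d ?z2 (V i) mod 2"
    using bit_wall_ca_differs_iff[of d ?z1 ?z2 "V i", OF shapes_j carrier] by simp
  then show ?case by (simp add: i_def)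
qed

definition flip_bit :: "nat \<Rightarrow> nat" where
  "flip_bit c = (if even c then Suc c else c - 1)"

lemma shape_flip_bit [simp]: "shape (flip_bit c) = shape c"
  by (auto simp: flip_bit_def elim!: evenE oddE)

lemma flip_bit_mod_2: "flip_bit c mod 2 \<noteq> c mod 2"
  by (auto simp: flip_bit_def elim!: evenE oddE)

lemma flip_bit_less: "c < 4 * d + 4 \<Longrightarrow> flip_bit c < 4 * d + 4"
  by (auto simp: flip_bit_def elim!: evenE; presburger)

lemma flipped_bit_reaches:
  assumes d: "2 \<le> d" and g: "g \<in> ever_nonblank d z"
    and outside: "\<And>v. v \<in> fg_carrier d \<Longrightarrow> R < length v \<Longrightarrow> shape (z v) \<noteq> 0"
  obtains L f where "f \<in> fg_carrier d" "R < length f"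
    "(wall_ca d ^^ L) z g \<noteq> (wall_ca d ^^ L) (z(f := flip_bit (z f))) g"
proof -
  have "ever_nonblank d z \<subseteq> fg_carrier d" by (auto simp: ever_nonblank_def)
  then obtain V S where ray: "nonbacktracking_ray d V S" "V 0 = g" "range V \<subseteq> ever_nonblank d z"
    using nonbacktracking_ray_exists[OF g _ ever_nonblank_extend[OF d]] by blast
  have carrier: "V i \<in> fg_carrier d" for i using ray(1) by (rule nonbacktracking_ray_in_fg_carrier)
  define B where "B = R + length g"
  have far: "R < length (V i)" if "B < i" for i
    using length_ray_ge[OF ray(1), of i] that ray(2) by (simp add: B_def)
  have "\<forall>i. \<exists>t. shape ((wall_ca d ^^ t) z (V i)) \<noteq> 0"
    using ray(3) by (auto simp: ever_nonblank_def)
  then obtain T where T: "\<And>i. shape ((wall_ca d ^^ T i) z (V i)) \<noteq> 0" by metis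
  define K where "K = Max (T ` {..B})"
  define L where "L = Suc (B + K)"
  have active: "shape ((wall_ca d ^^ (L - Suc i)) z (V i)) \<noteq> 0" for i
  proof (cases "i \<le> B")
    case True
    then have "T i \<le> K" unfolding K_def by (intro Max_ge) auto
    then have "T i \<le> L - Suc i" using True by (simp add: L_def)
    then show ?thesis
      using shape_funpow_wall_ca_stable[of "V i" d "T i" z "L - Suc i", OF carrier T] T by simp
  next
    case False
    then have "shape ((wall_ca d ^^ 0) z (V i)) \<noteq> 0" using outside[OF carrier far] by simp
    then show ?thesis
      using shape_funpow_wall_ca_stable[of "V i" d 0 z "L - Suc i", OF carrier] by simp
  qed
  let ?z = "z(V L := flip_bit (z (V L)))"
  have "(wall_ca d ^^ L) z (V (L - L)) mod 2 \<noteq> (wall_ca d ^^ L) ?z (V (L - L)) mod 2"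
  proof (rule bit_difference_along_ray[OF ray(1)])
    show "z (V L) mod 2 \<noteq> ?z (V L) mod 2" by (simp add: flip_bit_mod_2[symmetric])
  qed (use active in simp_all)
  then show ?thesis
    using carrier far[of L] ray(2) by (intro that[of "V L" L]) (auto simp: L_def)
qed

lemma no_equicont_point_wall_ca:
  assumes d: "2 \<le> d" and x: "x \<in> configs d (wall_alphabet d)"
  shows "\<not> equicont_point d (wall_alphabet d) (wall_ca d) x"
proof
  assume equicont: "equicont_point d (wall_alphabet d) (wall_ca d) x"
  obtain g where g: "g \<in> fg_carrier d"
    and anchor: "\<And>R. length g \<le> R \<Longrightarrow> g \<in> ever_nonblank d (activate_outside R x)"
    using ever_nonblank_anchor[OF d] by blast
  obtain \<delta> where "\<delta> > 0" and stable: "\<And>t. (wall_ca d ^^ t) ` cball_c d (wall_alphabet d) x \<delta> \<subseteq>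
      cball_c d (wall_alphabet d) ((wall_ca d ^^ t) x) ((1/2) ^ Suc (length g))"
    using equicont unfolding equicont_point_def
    by (metis zero_less_power zero_less_divide_1_iff zero_less_numeral)
  obtain R0 where "(1/2::real) ^ R0 < \<delta>" using real_arch_pow_inv[OF \<open>\<delta> > 0\<close>, of "1/2"] by auto
  define R where "R = R0 + length g"
  have "(1/2::real) ^ Suc R \<le> (1/2) ^ R0" unfolding R_def by (intro power_decreasing) auto
  with \<open>(1/2) ^ R0 < \<delta>\<close> have R: "(1/2::real) ^ Suc R \<le> \<delta>" by linarith
  have same_at_g: "(wall_ca d ^^ t) y g = (wall_ca d ^^ t) x g"
    if y: "y \<in> configs d (wall_alphabet d)" "\<And>v. v \<in> fg_carrier d \<Longrightarrow> length v \<le> R \<Longrightarrow> x v = y v"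
    for y t
  proof -
    have "cdist d x y \<le> (1/2) ^ Suc R" using y(2) by (rule cdist_le_if_agree)
    with R y(1) have "y \<in> cball_c d (wall_alphabet d) x \<delta>" by (simp add: cball_c_def)
    with stable have "cdist d ((wall_ca d ^^ t) x) ((wall_ca d ^^ t) y) \<le> (1/2) ^ Suc (length g)"
      by (auto simp: cball_c_def)
    from agree_if_cdist_le[OF this g] show ?thesis by simp
  qed
  let ?y = "activate_outside R x"
  have "g \<in> ever_nonblank d ?y" using anchor by (simp add: R_def)
  moreover have "shape (?y v) \<noteq> 0" if "R < length v" for v
    using that by (simp add: activate_outside_def)
  ultimately obtain L f where "f \<in> fg_carrier d" and f: "R < length f"
    and differs: "(wall_ca d ^^ L) ?y g \<noteq> (wall_ca d ^^ L) (?y(f := flip_bit (?y f))) g"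
    using flipped_bit_reaches[OF d] by blast
  have y: "?y \<in> configs d (wall_alphabet d)"
    using x by (auto simp: configs_def activate_outside_def wall_alphabet_def)
  then have "?y(f := flip_bit (?y f)) \<in> configs d (wall_alphabet d)"
    by (auto simp: configs_def wall_alphabet_def flip_bit_less)
  then have "(wall_ca d ^^ L) (?y(f := flip_bit (?y f))) g = (wall_ca d ^^ L) x g"
    by (rule same_at_g) (use f in \<open>auto simp: activate_outside_def\<close>)
  moreover have "(wall_ca d ^^ L) ?y g = (wall_ca d ^^ L) x g"
    using y by (rule same_at_g) (simp add: activate_outside_def)
  ultimately show False using differs by simp
qed

theorem corollary2:
  fixes d :: nat
  assumes "d \<ge> 2"
  shows "\<exists>(A::nat set) (S::fgword set) (\<mu>::(fgword \<Rightarrow> nat) \<Rightarrow> nat).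
           finite A \<and> A \<noteq> {} \<and> finite S \<and> S \<subseteq> fg_carrier d \<and> local_rule A S \<mu> \<and>
           \<not> sensitive d A (ca S \<mu>) \<and>
           \<not> (\<exists>x \<in> configs d A. equicont_point d A (ca S \<mu>) x)"
proof (intro exI conjI)
  show "finite (wall_alphabet d)" by (simp add: wall_alphabet_def)
  have "0 \<in> wall_alphabet d" by (simp add: wall_alphabet_def)
  then show "wall_alphabet d \<noteq> {}" by blast
  show "finite (wall_nbhd d)" by (simp add: wall_nbhd_def)
  show "wall_nbhd d \<subseteq> fg_carrier d" by (rule wall_nbhd_subset)
  show "local_rule (wall_alphabet d) (wall_nbhd d) (wall_rule d)" by (rule local_rule_wall_rule)
  show "\<not> sensitive d (wall_alphabet d) (wall_ca d)" by (rule not_sensitive_wall_ca)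
  show "\<not> (\<exists>x \<in> configs d (wall_alphabet d). equicont_point d (wall_alphabet d) (wall_ca d) x)"
    using no_equicont_point_wall_ca[OF assms] by blast
qed

end
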